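(* For all integers $0 <k \leq \ell <n$, \[ \begin{aligned} D(n-k,k)\, D(n-\ell,\ell) &\geq D(n-k+1,k-1)\, D(n-\ell-1,\ell+1), \\ D(n-k,k)\, D(n-\ell,\ell) &\geq D(n-k,k-1)\, D(n-\ell,\ell+1). \end{aligned} \]
   Context: For non-negative integers $m,n$, the Delannoy number $D(m,n)$ is the number of lattice paths from $(0,0)$ to $(m,n)$ using only steps from $(i,j)$ to $(i+1,j)$, $(i,j+1)$ or $(i+1,j+1)$. *)

theory Defs
  imports Main
begin

definition delannoy_steps :: "(nat \<times> nat) set" where
  "delannoy_steps = {(1,0), (0,1), (1,1)}"

definition delannoy_paths :: "nat \<Rightarrow> nat \<Rightarrow> (nat \<times> nat) list set" where
  "delannoy_paths m n = {ps. set ps \<subseteq> delannoy_steps \<and>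
      sum_list (map fst ps) = m \<and> sum_list (map snd ps) = n}"

definition Delannoy :: "nat \<Rightarrow> nat \<Rightarrow> nat" where
  "Delannoy m n = card (delannoy_paths m n)"

end

theory Submission
  imports Defs Complex_Main
begin

text \<open>Each row \<open>j \<mapsto> D(a, j)\<close> arises from the previous one by the recurrence
  \<open>D(a+1, j+1) = D(a+1, j) + D(a, j+1) + D(a, j)\<close>, i.e. by convolving with \<open>(1, 1)\<close> and then
  taking partial sums; both operations preserve log-concavity of positive sequences. Hence every
  row is log-concave, so the ratio \<open>D(a, j+1) / D(a, j)\<close> decreases in \<open>j\<close>, and the same
  recurrence shows it increases in \<open>a\<close>. The second inequality is this monotonicity of ratios,
  cross-multiplied; the first one multiplies it with the same monotonicity along the other
  coordinate, which is available by the symmetry \<open>D(m, n) = D(n, m)\<close>.\<close>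

definition log_concave_seq :: "(nat \<Rightarrow> 'a::linordered_idom) \<Rightarrow> bool" where
  "log_concave_seq u \<longleftrightarrow> (\<forall>j. u j * u (Suc (Suc j)) \<le> (u (Suc j))\<^sup>2)"

lemma log_concave_seqD: "log_concave_seq u \<Longrightarrow> u j * u (Suc (Suc j)) \<le> (u (Suc j))\<^sup>2"
  unfolding log_concave_seq_def by blast

lemma log_concave_seq_cross_le:
  fixes u :: "nat \<Rightarrow> 'a::linordered_idom"
  assumes pos: "\<And>j. u j > 0" and lc: "log_concave_seq u" and "j \<le> i"
  shows "u (Suc i) * u j \<le> u (Suc j) * u i"
  using \<open>j \<le> i\<close>
proof (induction i rule: dec_induct)
  case base then show ?case by (simp add: mult.commute)
next
  case (step i)
  have "(u i * u (Suc i)) * (u (Suc (Suc i)) * u j) = (u (Suc i) * u j) * (u i * u (Suc (Suc i)))"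
    by (simp add: algebra_simps)
  also have "\<dots> \<le> (u (Suc j) * u i) * (u (Suc i))\<^sup>2"
    by (rule mult_mono[OF step.IH log_concave_seqD[OF lc]])
      (use pos in \<open>auto intro: less_imp_le\<close>)
  also have "\<dots> = (u i * u (Suc i)) * (u (Suc j) * u (Suc i))"
    by (simp add: power2_eq_square algebra_simps)
  finally show ?case
    using pos by (simp add: mult_le_cancel_left_pos)
qed

lemma log_concave_seq_add_shift:
  fixes u v :: "nat \<Rightarrow> 'a::linordered_idom"
  assumes pos: "\<And>j. u j > 0" and lc: "log_concave_seq u"
    and v0: "v 0 = u 0" and vSuc: "\<And>j. v (Suc j) = u (Suc j) + u j"
  shows "log_concave_seq v"
  unfolding log_concave_seq_def
proof
  fix j
  show "v j * v (Suc (Suc j)) \<le> (v (Suc j))\<^sup>2"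
  proof (cases j)
    case 0
    have "u 0 * u (Suc (Suc 0)) \<le> (u (Suc 0))\<^sup>2" by (rule log_concave_seqD[OF lc])
    moreover have "0 \<le> u 0 * u 0" "0 \<le> u 0 * u (Suc 0)" using pos by (auto intro: less_imp_le)
    ultimately show ?thesis
      using 0 by (simp add: v0 vSuc power2_eq_square algebra_simps add_increasing)
  next
    case (Suc i)
    have "u (Suc i) * u (Suc (Suc (Suc i))) \<le> (u (Suc (Suc i)))\<^sup>2"
      "u i * u (Suc (Suc i)) \<le> (u (Suc i))\<^sup>2"
      using log_concave_seqD[OF lc] by auto
    moreover have "u (Suc (Suc (Suc i))) * u i \<le> u (Suc i) * u (Suc (Suc i))"
      using log_concave_seq_cross_le[OF pos lc, of i "Suc (Suc i)"] by simp
    ultimately show ?thesis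
      using Suc by (simp add: vSuc power2_eq_square algebra_simps)
  qed
qed

lemma partial_sums_cross_le:
  fixes v s :: "nat \<Rightarrow> 'a::linordered_idom"
  assumes pos: "\<And>j. v j > 0" and lc: "log_concave_seq v"
    and s0: "s 0 = v 0" and sSuc: "\<And>j. s (Suc j) = s j + v (Suc j)"
  shows "s j * v (Suc (Suc j)) \<le> s (Suc j) * v (Suc j)"
proof (induction j)
  case 0
  have "v 0 * v (Suc (Suc 0)) \<le> (v (Suc 0))\<^sup>2" by (rule log_concave_seqD[OF lc])
  moreover have "0 \<le> v 0 * v (Suc 0)" using pos by (auto intro: less_imp_le)
  ultimately show ?case by (simp add: s0 sSuc power2_eq_square algebra_simps add_increasing)
next
  case (Suc j)
  have s_nonneg: "s i \<ge> 0" for i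
    by (induction i) (simp_all add: s0 sSuc less_imp_le[OF pos] add_nonneg_nonneg)
  have lc_j: "v (Suc j) * v (Suc (Suc (Suc j))) \<le> (v (Suc (Suc j)))\<^sup>2"
    by (rule log_concave_seqD[OF lc])
  have "v (Suc j) * (s j * v (Suc (Suc (Suc j)))) = s j * (v (Suc j) * v (Suc (Suc (Suc j))))"
    by (simp add: algebra_simps)
  also have "\<dots> \<le> s j * (v (Suc (Suc j)))\<^sup>2"
    by (rule mult_left_mono[OF lc_j s_nonneg])
  also have "\<dots> = (s j * v (Suc (Suc j))) * v (Suc (Suc j))"
    by (simp add: power2_eq_square)
  also have "\<dots> \<le> (s (Suc j) * v (Suc j)) * v (Suc (Suc j))"
    by (rule mult_right_mono[OF Suc.IH]) (use pos in \<open>simp add: less_imp_le\<close>)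
  also have "\<dots> = v (Suc j) * (s (Suc j) * v (Suc (Suc j)))"
    by (simp add: algebra_simps)
  finally have "s j * v (Suc (Suc (Suc j))) \<le> s (Suc j) * v (Suc (Suc j))"
    using pos by (simp add: mult_le_cancel_left_pos)
  then show ?case using lc_j by (simp add: sSuc power2_eq_square algebra_simps)
qed

lemma log_concave_seq_partial_sums:
  fixes v s :: "nat \<Rightarrow> 'a::linordered_idom"
  assumes pos: "\<And>j. v j > 0" and lc: "log_concave_seq v"
    and s0: "s 0 = v 0" and sSuc: "\<And>j. s (Suc j) = s j + v (Suc j)"
  shows "log_concave_seq s"
  unfolding log_concave_seq_def
proof
  fix j
  show "s j * s (Suc (Suc j)) \<le> (s (Suc j))\<^sup>2"
    using partial_sums_cross_le[OF assms, of j] by (simp add: sSuc power2_eq_square algebra_simps)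
qed

text \<open>The hypotheses on \<open>w\<close> say that \<open>w\<close> is the sequence of partial sums of
  \<open>u\<^sub>j + u\<^sub>j\<^sub>-\<^sub>1\<close> (with \<open>u\<^sub>-\<^sub>1 = 0\<close>).\<close>

lemma log_concave_seq_transform:
  fixes u w :: "nat \<Rightarrow> 'a::linordered_idom"
  assumes pos: "\<And>j. u j > 0" and lc: "log_concave_seq u"
    and w0: "w 0 = u 0" and wSuc: "\<And>j. w (Suc j) = w j + u (Suc j) + u j"
  shows "log_concave_seq w"
proof -
  define v where "v j = (case j of 0 \<Rightarrow> u 0 | Suc i \<Rightarrow> u (Suc i) + u i)" for j
  have v_pos: "v j > 0" for j
    using pos by (simp add: v_def add_pos_pos split: nat.split)
  have "log_concave_seq v"
    by (rule log_concave_seq_add_shift[OF pos lc]) (simp_all add: v_def)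
  then show ?thesis
    by (rule log_concave_seq_partial_sums[OF v_pos]) (simp_all add: v_def w0 wSuc)
qed

lemma transform_cross_le:
  fixes u w :: "nat \<Rightarrow> 'a::linordered_idom"
  assumes pos: "\<And>j. u j > 0" and lc: "log_concave_seq u"
    and w0: "w 0 = u 0" and wSuc: "\<And>j. w (Suc j) = w j + u (Suc j) + u j"
  shows "u (Suc j) * w j \<le> u j * w (Suc j)"
proof (induction j)
  case 0
  show ?case using pos[of 0] pos[of 1] by (simp add: w0 wSuc algebra_simps)
next
  case (Suc j)
  have w_nonneg: "w i \<ge> 0" for i
    by (induction i) (simp_all add: w0 wSuc less_imp_le[OF pos] add_nonneg_nonneg)
  have lc_j: "u j * u (Suc (Suc j)) \<le> (u (Suc j))\<^sup>2"
    by (rule log_concave_seqD[OF lc])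
  have "u (Suc j) * (u (Suc (Suc j)) * w j) = u (Suc (Suc j)) * (u (Suc j) * w j)"
    by (simp add: algebra_simps)
  also have "\<dots> \<le> u (Suc (Suc j)) * (u j * w (Suc j))"
    by (rule mult_left_mono[OF Suc.IH]) (use pos in \<open>simp add: less_imp_le\<close>)
  also have "\<dots> = (u j * u (Suc (Suc j))) * w (Suc j)"
    by (simp add: algebra_simps)
  also have "\<dots> \<le> (u (Suc j))\<^sup>2 * w (Suc j)"
    by (rule mult_right_mono[OF lc_j w_nonneg])
  also have "\<dots> = u (Suc j) * (u (Suc j) * w (Suc j))"
    by (simp add: power2_eq_square algebra_simps)
  finally have "u (Suc (Suc j)) * w j \<le> u (Suc j) * w (Suc j)"
    using pos by (simp add: mult_le_cancel_left_pos)
  then show ?case using lc_j by (simp add: wSuc power2_eq_square algebra_simps)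
qed

lemma delannoy_paths_decompose:
  "delannoy_paths m n =
       (if m = 0 \<and> n = 0 then {[]} else {})
     \<union> (if 0 < m then (#) (1,0) ` delannoy_paths (m - 1) n else {})
     \<union> (if 0 < n then (#) (0,1) ` delannoy_paths m (n - 1) else {})
     \<union> (if 0 < m \<and> 0 < n then (#) (1,1) ` delannoy_paths (m - 1) (n - 1) else {})"
  (is "_ = ?rhs")
proof (intro set_eqI iffI)
  fix ps assume "ps \<in> delannoy_paths m n"
  then show "ps \<in> ?rhs"
    by (cases ps) (auto simp: delannoy_paths_def delannoy_steps_def)
next
  fix ps assume "ps \<in> ?rhs"
  then show "ps \<in> delannoy_paths m n"
    by (auto simp: delannoy_paths_def delannoy_steps_def split: if_splits)
qed

lemma finite_delannoy_paths: "finite (delannoy_paths m n)"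
proof (induction "m + n" arbitrary: m n rule: less_induct)
  case less
  then show ?case by (subst delannoy_paths_decompose) auto
qed

lemma Delannoy_recurrence:
  "Delannoy m n =
       (if m = 0 \<and> n = 0 then 1 else 0)
     + (if 0 < m then Delannoy (m - 1) n else 0)
     + (if 0 < n then Delannoy m (n - 1) else 0)
     + (if 0 < m \<and> 0 < n then Delannoy (m - 1) (n - 1) else 0)"
proof -
  let ?A = "(if m = 0 \<and> n = 0 then {[]} else {}) :: (nat \<times> nat) list set"
  let ?B = "if 0 < m then (#) (1,0) ` delannoy_paths (m - 1) n else {}"
  let ?C = "if 0 < n then (#) (0,1) ` delannoy_paths m (n - 1) else {}"
  let ?E = "if 0 < m \<and> 0 < n then (#) (1,1) ` delannoy_paths (m - 1) (n - 1) else {}"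
  have "card (?A \<union> ?B \<union> ?C \<union> ?E) = card ?A + card ?B + card ?C + card ?E"
    by (subst card_Un_disjoint; auto simp: finite_delannoy_paths)+
  then show ?thesis
    by (simp add: Delannoy_def delannoy_paths_decompose[of m n] card_image)
qed

lemma Delannoy_0_left [simp]: "Delannoy 0 n = 1"
  by (induction n) (subst Delannoy_recurrence, simp)+

lemma Delannoy_0_right [simp]: "Delannoy m 0 = 1"
  by (induction m) (subst Delannoy_recurrence, simp)+

lemma Delannoy_Suc_Suc:
  "Delannoy (Suc m) (Suc n) = Delannoy m (Suc n) + Delannoy (Suc m) n + Delannoy m n"
  by (subst Delannoy_recurrence) simp

lemma Delannoy_commute: "Delannoy m n = Delannoy n m"
proof (induction m arbitrary: n)
  case 0
  then show ?case by simp
next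
  case (Suc m)
  then show ?case by (induction n) (simp_all add: Delannoy_Suc_Suc)
qed

lemma Delannoy_pos: "Delannoy m n > 0"
proof (induction m arbitrary: n)
  case 0
  then show ?case by simp
next
  case (Suc m)
  then show ?case by (cases n) (simp_all add: Delannoy_Suc_Suc)
qed

lemma log_concave_seq_Delannoy: "log_concave_seq (\<lambda>j. real (Delannoy a j))"
proof (induction a)
  case 0
  then show ?case by (simp add: log_concave_seq_def)
next
  case (Suc a)
  show ?case
    by (rule log_concave_seq_transform[OF _ Suc.IH]) (simp_all add: Delannoy_pos Delannoy_Suc_Suc)
qed

lemma Delannoy_Suc_cross_le:
  "real (Delannoy a (Suc j)) * real (Delannoy (Suc a) j)
     \<le> real (Delannoy a j) * real (Delannoy (Suc a) (Suc j))"
  by (rule transform_cross_le[OF _ log_concave_seq_Delannoy]) (simp_all add: Delannoy_pos Delannoy_Suc_Suc)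

definition Delannoy_ratio :: "nat \<Rightarrow> nat \<Rightarrow> real" where
  "Delannoy_ratio a j = real (Delannoy a (Suc j)) / real (Delannoy a j)"

lemma Delannoy_ratio_nonneg: "Delannoy_ratio a j \<ge> 0"
  by (simp add: Delannoy_ratio_def)

lemma Delannoy_ratio_le:
  assumes "x \<le> y" and "j \<le> i"
  shows "Delannoy_ratio x i \<le> Delannoy_ratio y j"
proof -
  have pos: "real (Delannoy a b) > 0" for a b by (simp add: Delannoy_pos)
  have "Delannoy_ratio x i \<le> Delannoy_ratio x j"
    using log_concave_seq_cross_le[OF _ log_concave_seq_Delannoy \<open>j \<le> i\<close>] pos
    by (simp add: Delannoy_ratio_def divide_le_eq le_divide_eq mult.commute mult.left_commute)
  also have "\<dots> \<le> Delannoy_ratio y j"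
  proof (rule lift_Suc_mono_le[of "\<lambda>a. Delannoy_ratio a j", OF _ \<open>x \<le> y\<close>])
    show "Delannoy_ratio a j \<le> Delannoy_ratio (Suc a) j" for a
      using Delannoy_Suc_cross_le[of a j] pos
      by (simp add: Delannoy_ratio_def divide_le_eq le_divide_eq mult.commute mult.left_commute)
  qed
  finally show ?thesis .
qed

lemma Delannoy_cross_le:
  assumes "x \<le> y" and "j \<le> i"
  shows "Delannoy x (Suc i) * Delannoy y j \<le> Delannoy y (Suc j) * Delannoy x i"
proof -
  have "real (Delannoy x (Suc i)) * real (Delannoy y j) \<le> real (Delannoy y (Suc j)) * real (Delannoy x i)"
    using Delannoy_ratio_le[OF assms] Delannoy_pos[of x i] Delannoy_pos[of y j]
    by (simp add: Delannoy_ratio_def divide_le_eq le_divide_eq mult.commute mult.left_commute)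
  then show ?thesis by (simp only: of_nat_mult[symmetric] of_nat_le_iff)
qed

lemma Delannoy_antidiagonal_cross_le:
  assumes "x \<le> y" and "j \<le> i"
  shows "Delannoy (Suc y) j * Delannoy x (Suc i) \<le> Delannoy y (Suc j) * Delannoy (Suc x) i"
proof -
  have "Delannoy_ratio x i * Delannoy_ratio j y \<le> Delannoy_ratio y j * Delannoy_ratio i x"
    using Delannoy_ratio_le[OF assms] Delannoy_ratio_le[OF \<open>j \<le> i\<close> \<open>x \<le> y\<close>]
    by (intro mult_mono) (simp_all add: Delannoy_ratio_nonneg)
  then have "real (Delannoy (Suc y) j) * real (Delannoy x (Suc i))
      \<le> real (Delannoy y (Suc j)) * real (Delannoy (Suc x) i)"
    using Delannoy_pos[of x i] Delannoy_pos[of y j]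
    by (simp add: Delannoy_ratio_def Delannoy_commute[of _ x] Delannoy_commute[of _ y]
        Delannoy_commute[of i] Delannoy_commute[of j] field_simps)
  then show ?thesis by (simp only: of_nat_mult[symmetric] of_nat_le_iff)
qed

theorem corollary6p3:
  fixes k l n :: nat
  assumes "0 < k" and "k \<le> l" and "l < n"
  shows "Delannoy (n - k) k * Delannoy (n - l) l
           \<ge> Delannoy (n - k + 1) (k - 1) * Delannoy (n - l - 1) (l + 1)
       \<and> Delannoy (n - k) k * Delannoy (n - l) l
           \<ge> Delannoy (n - k) (k - 1) * Delannoy (n - l) (l + 1)"
proof -
  have "Delannoy (Suc (n - k)) (k - 1) * Delannoy (n - l - 1) (Suc l)
      \<le> Delannoy (n - k) (Suc (k - 1)) * Delannoy (Suc (n - l - 1)) l"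
    by (rule Delannoy_antidiagonal_cross_le) (use assms in auto)
  moreover have "Delannoy (n - l) (Suc l) * Delannoy (n - k) (k - 1)
      \<le> Delannoy (n - k) (Suc (k - 1)) * Delannoy (n - l) l"
    by (rule Delannoy_cross_le) (use assms in auto)
  moreover have "Suc (k - 1) = k" and "Suc (n - l - 1) = n - l"
    using assms by auto
  ultimately show ?thesis by (simp add: mult.commute)
qed

end
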